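(* For every $n\in\mathbb N$ and every choice of digits $c_j\in\{0,\dots,m_j\}$, $j=1,\dots,n$, the increment of $F$ on the cylinder $\Delta^{-\tilde Q}_{c_1c_2\dots c_n}$ equals $$\mu_F\big(\Delta^{-\tilde Q}_{c_1c_2\dots c_n}\big)=\prod_{j=1}^{n}\tilde p_{c_j,j}.$$
   Context: Let $(m_n)_{n\ge1}$ be finite nonnegative integers and $\tilde Q=\|q_{i,n}\|$ ($i\in\{0,\dots,m_n\}$) with $q_{i,n}>0$, $\sum_{i}q_{i,n}=1$ for all $n$, and $\prod_n q_{i_n,n}=0$ for every digit sequence $(i_n)$. Put $a_{0,n}=0$, $a_{i,n}=\sum_{l<i}q_{l,n}$; $\Delta^{\tilde Q}_{j_1j_2\dots}=a_{j_1,1}+\sum_{n\ge2}a_{j_n,n}\prod_{l<n}q_{j_l,l}$. For odd $n$: $\tilde q_{i,n}=q_{i,n}$; for even $n$: $\tilde q_{i,n}=q_{m_n-i,n}$. The nega-$\tilde Q$-representation $x=\Delta^{-\tilde Q}_{i_1i_2\dots}$ means $x=\Delta^{\tilde Q}_{i_1[m_2-i_2]i_3[m_4-i_4]\dots}$; every $x\in[0,1]$ has one. The cylinder $\Delta^{-\tilde Q}_{c_1\dots c_n}$ is the set of $x\in[0,1]$ having a nega-$\tilde Q$-representation whose first $n$ digits are $c_1,\dots,c_n$; it is the segment with endpoints $A=\Delta^{-\tilde Q}_{c_1\dots c_nm_{n+1}0m_{n+3}0m_{n+5}\dots}$ and $B=\Delta^{-\tilde Q}_{c_1\dots c_n0m_{n+2}0m_{n+4}\dots}$,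 where $A$ is the left and $B$ the right endpoint if $n$ is odd, and vice versa if $n$ is even. The increment $\mu_F$ of $F$ on the cylinder is $F(\text{right endpoint})-F(\text{left endpoint})$. Let $P=\|p_{i,n}\|$ have the same shape with $p_{i,n}\in(-1,1)$, $\sum_ip_{i,n}=1$, $\prod_n|p_{i_n,n}|=0$ for every digit sequence, $0<\sum_{i<c}p_{i,n}<1$ for $c\in\{1,\dots,m_n\}$. Put $\beta_{0,n}=0$, $\beta_{c,n}=\sum_{i<c}p_{i,n}$; for odd $n$: $\tilde p_{i,n}=p_{i,n}$, $\tilde\beta_{i,n}=\beta_{i,n}$; for even $n$: $\tilde p_{i,n}=p_{m_n-i,n}$, $\tilde\beta_{i,n}=\beta_{m_n-i,n}$. $F(x)=\beta_{i_1,1}+\sum_{k\ge2}\tilde\beta_{i_k,k}\prod_{j<k}\tilde p_{i_j,j}$ for $x=\Delta^{-\tilde Q}_{i_1i_2\dots}$ (independent of the choice of representation). *)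

theory Defs
  imports "HOL-Analysis.Analysis"
begin

text \<open>Conventions: positions n are indexed from 1; digit i of position n.
  m :: nat \<Rightarrow> nat gives m_n; q i n = q_{i,n}; p i n = p_{i,n};
  a digit sequence is a function d :: nat \<Rightarrow> nat (value at 0 irrelevant).\<close>

definition admissible :: "(nat \<Rightarrow> nat) \<Rightarrow> (nat \<Rightarrow> nat) \<Rightarrow> bool" where
  "admissible m d \<longleftrightarrow> (\<forall>n\<ge>1. d n \<le> m n)"

definition aQ :: "(nat \<Rightarrow> nat \<Rightarrow> real) \<Rightarrow> nat \<Rightarrow> nat \<Rightarrow> real" where
  "aQ q i n = (\<Sum>l<i. q l n)"

definition DeltaQ :: "(nat \<Rightarrow> nat \<Rightarrow> real) \<Rightarrow> (nat \<Rightarrow> nat) \<Rightarrow> real" where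
  "DeltaQ q j = (\<Sum>k. aQ q (j (Suc k)) (Suc k) * (\<Prod>l\<in>{1..k}. q (j l) l))"

text \<open>Nega-Q-representation value: x = Delta^Q_{i1 [m2-i2] i3 [m4-i4] ...}\<close>
definition negaDigits :: "(nat \<Rightarrow> nat) \<Rightarrow> (nat \<Rightarrow> nat) \<Rightarrow> nat \<Rightarrow> nat" where
  "negaDigits m d n = (if odd n then d n else m n - d n)"

definition negaQ :: "(nat \<Rightarrow> nat) \<Rightarrow> (nat \<Rightarrow> nat \<Rightarrow> real) \<Rightarrow> (nat \<Rightarrow> nat) \<Rightarrow> real" where
  "negaQ m q d = DeltaQ q (negaDigits m d)"

definition betaP :: "(nat \<Rightarrow> nat \<Rightarrow> real) \<Rightarrow> nat \<Rightarrow> nat \<Rightarrow> real" where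
  "betaP p c n = (\<Sum>i<c. p i n)"

definition ptilde :: "(nat \<Rightarrow> nat) \<Rightarrow> (nat \<Rightarrow> nat \<Rightarrow> real) \<Rightarrow> nat \<Rightarrow> nat \<Rightarrow> real" where
  "ptilde m p i n = (if odd n then p i n else p (m n - i) n)"

definition betatilde :: "(nat \<Rightarrow> nat) \<Rightarrow> (nat \<Rightarrow> nat \<Rightarrow> real) \<Rightarrow> nat \<Rightarrow> nat \<Rightarrow> real" where
  "betatilde m p i n = (if odd n then betaP p i n else betaP p (m n - i) n)"

text \<open>F evaluated on a digit sequence:
  beta_{i1,1} + sum_{k>=2} betatilde_{ik,k} prod_{j<k} ptilde_{ij,j}
  (the k = 1 term is beta_{i1,1} since betatilde = beta at odd positions).\<close>
definition Fdigits :: "(nat \<Rightarrow> nat) \<Rightarrow> (nat \<Rightarrow> nat \<Rightarrow> real) \<Rightarrow> (nat \<Rightarrow> nat) \<Rightarrow> real" where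
  "Fdigits m p d = (\<Sum>k. betatilde m p (d (Suc k)) (Suc k) * (\<Prod>j\<in>{1..k}. ptilde m p (d j) j))"

definition Ffun :: "(nat \<Rightarrow> nat) \<Rightarrow> (nat \<Rightarrow> nat \<Rightarrow> real) \<Rightarrow> (nat \<Rightarrow> nat \<Rightarrow> real) \<Rightarrow> real \<Rightarrow> real" where
  "Ffun m q p x = Fdigits m p (SOME d. admissible m d \<and> negaQ m q d = x)"

text \<open>Endpoint digit sequences of the cylinder Delta^{-Q}_{c1...cn}:
  A = c1..cn m_{n+1} 0 m_{n+3} 0 ...,   B = c1..cn 0 m_{n+2} 0 m_{n+4} ...\<close>
definition cylA :: "(nat \<Rightarrow> nat) \<Rightarrow> nat \<Rightarrow> (nat \<Rightarrow> nat) \<Rightarrow> nat \<Rightarrow> nat" where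
  "cylA m n c k = (if k \<le> n then c k else if odd (k - n) then m k else 0)"

definition cylB :: "(nat \<Rightarrow> nat) \<Rightarrow> nat \<Rightarrow> (nat \<Rightarrow> nat) \<Rightarrow> nat \<Rightarrow> nat" where
  "cylB m n c k = (if k \<le> n then c k else if odd (k - n) then 0 else m k)"

text \<open>Increment of F on the cylinder: F(right endpoint) - F(left endpoint);
  A is the left endpoint iff n is odd.\<close>
definition muF :: "(nat \<Rightarrow> nat) \<Rightarrow> (nat \<Rightarrow> nat \<Rightarrow> real) \<Rightarrow> (nat \<Rightarrow> nat \<Rightarrow> real) \<Rightarrow> nat \<Rightarrow> (nat \<Rightarrow> nat) \<Rightarrow> real" where
  "muF m q p n c =
     (let A = negaQ m q (cylA m n c); B = negaQ m q (cylB m n c)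
      in if odd n then Ffun m q p B - Ffun m q p A else Ffun m q p A - Ffun m q p B)"

end

theory Submission
  imports Defs
begin

text \<open>Passing from nega-digits d to the ordinary digits e = negaDigits m d turns the point into the
  ordinary Q-expansion of e and F into the ordinary P-expansion of e. Two admissible digit
  sequences with the same Q-value either coincide or first differ at a position where one has
  x and the other x+1, followed by the tails m m m ... and 0 0 0 ... respectively. Since
  the digits p sum to 1 and the products of |p| tend to 0, such a pair has equal P-values,
  so F is well defined. The ordinary digits of the two cylinder endpoints share the prefix of
  length n and continue with 0 0 0 ... resp. m m m ..., so their F-values are S and
  S + \<Prod>j\<le>n. ptilde (c j) j; the increment is the difference of the two.\<close>

lemma aQ_0 [simp]: "aQ q 0 k = 0"
  by (simp add: aQ_def)

lemma aQ_Suc: "aQ q (Suc i) k = aQ q i k + q i k"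
  by (simp add: aQ_def)

lemma betaP_Suc: "betaP p (Suc i) k = betaP p i k + p i k"
  by (simp add: betaP_def)

lemma negaDigits_admissible: "admissible m d \<Longrightarrow> admissible m (negaDigits m d)"
  by (auto simp: admissible_def negaDigits_def)

section \<open>Ordinary Q-expansions\<close>

locale Q_expansion =
  fixes m :: "nat \<Rightarrow> nat" and q :: "nat \<Rightarrow> nat \<Rightarrow> real"
  assumes q_pos: "\<And>k i. k \<ge> 1 \<Longrightarrow> i \<le> m k \<Longrightarrow> q i k > 0"
    and q_sum: "\<And>k. k \<ge> 1 \<Longrightarrow> (\<Sum>i\<le>m k. q i k) = 1"
begin

lemma aQ_mono:
  assumes "k \<ge> 1" "i \<le> j" "j \<le> Suc (m k)"
  shows "aQ q i k \<le> aQ q j k"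
  using assms(2,3)
proof (induction j rule: dec_induct)
  case (step j)
  then have "q j k > 0" using q_pos assms(1) by auto
  then show ?case using step by (simp add: aQ_Suc)
qed simp

lemma aQ_Suc_max: "k \<ge> 1 \<Longrightarrow> aQ q (Suc (m k)) k = 1"
  using q_sum by (simp add: aQ_def lessThan_Suc_atMost)

lemma aQ_nonneg: "k \<ge> 1 \<Longrightarrow> i \<le> Suc (m k) \<Longrightarrow> 0 \<le> aQ q i k"
  using aQ_mono[of k 0 i] by simp

lemma aQ_le_1: "k \<ge> 1 \<Longrightarrow> i \<le> Suc (m k) \<Longrightarrow> aQ q i k \<le> 1"
  using aQ_mono[of k i "Suc (m k)"] aQ_Suc_max by simp

lemma q_prod_nonneg: "admissible m e \<Longrightarrow> 0 \<le> (\<Prod>l\<in>{Suc N..K}. q (e l) l)"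
proof (intro prod_nonneg)
  fix l assume "admissible m e" "l \<in> {Suc N..K}"
  then show "0 \<le> q (e l) l" using q_pos[of l "e l"] by (auto simp: admissible_def)
qed

text \<open>The value of the digits after position N, rescaled to [0,1].\<close>

definition Q_tail_term :: "(nat \<Rightarrow> nat) \<Rightarrow> nat \<Rightarrow> nat \<Rightarrow> real" where
  "Q_tail_term e N j = aQ q (e (Suc (N + j))) (Suc (N + j)) * (\<Prod>l\<in>{Suc N..N + j}. q (e l) l)"

definition Q_tail :: "(nat \<Rightarrow> nat) \<Rightarrow> nat \<Rightarrow> real" where
  "Q_tail e N = (\<Sum>j. Q_tail_term e N j)"

lemma Q_tail_0: "Q_tail e 0 = DeltaQ q e"
  by (simp add: Q_tail_def Q_tail_term_def DeltaQ_def)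

lemma Q_tail_term_nonneg: "admissible m e \<Longrightarrow> 0 \<le> Q_tail_term e N j"
  unfolding Q_tail_term_def
  by (intro mult_nonneg_nonneg aQ_nonneg q_prod_nonneg) (auto simp: admissible_def le_SucI)

lemma Q_tail_partial_sum_le:
  assumes e: "admissible m e"
  shows "(\<Sum>j<J. Q_tail_term e N j) + (\<Prod>l\<in>{Suc N..N + J}. q (e l) l) \<le> 1"
proof (induction J)
  case (Suc J)
  let ?k = "Suc (N + J)"
  let ?x = "e ?k"
  let ?P = "\<Prod>l\<in>{Suc N..N + J}. q (e l) l"
  have "aQ q ?x ?k + q ?x ?k \<le> 1"
    using aQ_le_1[of ?k "Suc ?x"] e by (simp add: aQ_Suc admissible_def)
  then have "?P * (aQ q ?x ?k + q ?x ?k) \<le> ?P"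
    using q_prod_nonneg[OF e] by (simp add: mult_left_le)
  then show ?case using Suc by (simp add: Q_tail_term_def algebra_simps)
qed simp

lemma Q_tail_partial_sum_le_1:
  assumes "admissible m e"
  shows "(\<Sum>j<J. Q_tail_term e N j) \<le> 1"
  using Q_tail_partial_sum_le[OF assms, of N J] q_prod_nonneg[OF assms, of N "N + J"] by linarith

lemma Q_tail_summable: "admissible m e \<Longrightarrow> summable (Q_tail_term e N)"
  by (rule summableI_nonneg_bounded[where x = 1])
    (simp_all add: Q_tail_term_nonneg Q_tail_partial_sum_le_1)

lemma Q_tail_nonneg: "admissible m e \<Longrightarrow> 0 \<le> Q_tail e N"
  unfolding Q_tail_def by (intro suminf_nonneg Q_tail_summable Q_tail_term_nonneg)

lemma Q_tail_le_1: "admissible m e \<Longrightarrow> Q_tail e N \<le> 1"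
  unfolding Q_tail_def
  by (intro suminf_le_const Q_tail_summable Q_tail_partial_sum_le_1)

lemma Q_tail_Suc:
  assumes e: "admissible m e"
  shows "Q_tail e N = aQ q (e (Suc N)) (Suc N) + q (e (Suc N)) (Suc N) * Q_tail e (Suc N)"
proof -
  have shift: "Q_tail_term e N (Suc j) = q (e (Suc N)) (Suc N) * Q_tail_term e (Suc N) j" for j
    using prod.atLeast_Suc_atMost[of "Suc N" "N + Suc j" "\<lambda>l. q (e l) l"]
    by (simp add: Q_tail_term_def ac_simps)
  have "(\<Sum>j. Q_tail_term e N (Suc j)) = q (e (Suc N)) (Suc N) * Q_tail e (Suc N)"
    unfolding shift Q_tail_def by (rule suminf_mult[OF Q_tail_summable[OF e]])
  moreover have "Q_tail_term e N 0 = aQ q (e (Suc N)) (Suc N)"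
    by (simp add: Q_tail_term_def)
  ultimately show ?thesis
    using suminf_split_head[OF Q_tail_summable[OF e, of N]] by (simp add: Q_tail_def)
qed

lemma Q_tail_eq_1_Suc:
  assumes e: "admissible m e" and tail: "Q_tail e N = 1"
  shows "e (Suc N) = m (Suc N) \<and> Q_tail e (Suc N) = 1"
proof -
  let ?k = "Suc N"
  let ?x = "e ?k"
  have x: "?x \<le> m ?k" and qx: "q ?x ?k > 0"
    using e q_pos by (auto simp: admissible_def)
  have "q ?x ?k * Q_tail e ?k \<le> q ?x ?k"
    using Q_tail_le_1[OF e] Q_tail_nonneg[OF e] qx by (simp add: mult_left_le)
  moreover have "aQ q ?x ?k + q ?x ?k * Q_tail e ?k = 1"
    using Q_tail_Suc[OF e, of N] tail by simp
  moreover have "aQ q (Suc ?x) ?k \<le> 1"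
    using aQ_le_1[of ?k "Suc ?x"] x by simp
  ultimately have top: "aQ q (Suc ?x) ?k = 1" and "q ?x ?k * Q_tail e ?k = q ?x ?k * 1"
    using aQ_Suc[of q ?x ?k] by linarith+
  then have "Q_tail e ?k = 1" using qx by simp
  moreover have "?x = m ?k"
  proof (rule ccontr)
    assume "?x \<noteq> m ?k"
    then have "aQ q (Suc (Suc ?x)) ?k \<le> 1" and "q (Suc ?x) ?k > 0"
      using aQ_le_1[of ?k "Suc (Suc ?x)"] q_pos x by simp_all
    then show False using top by (simp add: aQ_Suc)
  qed
  ultimately show ?thesis by simp
qed

lemma Q_tail_eq_0_Suc:
  assumes e: "admissible m e" and tail: "Q_tail e N = 0"
  shows "e (Suc N) = 0 \<and> Q_tail e (Suc N) = 0"
proof -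
  let ?k = "Suc N"
  let ?x = "e ?k"
  have x: "?x \<le> m ?k" and qx: "q ?x ?k > 0"
    using e q_pos by (auto simp: admissible_def)
  have "0 \<le> q ?x ?k * Q_tail e ?k" and "0 \<le> aQ q ?x ?k"
    using Q_tail_nonneg[OF e] qx aQ_nonneg x by simp_all
  moreover have "aQ q ?x ?k + q ?x ?k * Q_tail e ?k = 0"
    using Q_tail_Suc[OF e, of N] tail by simp
  ultimately have bottom: "aQ q ?x ?k = 0" and "q ?x ?k * Q_tail e ?k = 0"
    by linarith+
  then have "Q_tail e ?k = 0" using qx by simp
  moreover have "?x = 0"
  proof (rule ccontr)
    assume "?x \<noteq> 0"
    then have "aQ q 1 ?k \<le> aQ q ?x ?k" using aQ_mono[of ?k 1 ?x] x by simp
    then show False using bottom q_pos[of ?k 0] by (simp add: aQ_def)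
  qed
  ultimately show ?thesis by simp
qed

lemma Q_tail_eq_1_digits:
  assumes e: "admissible m e" and "Q_tail e N = 1" and "N < k"
  shows "e k = m k"
proof -
  have "e (Suc (N + j)) = m (Suc (N + j)) \<and> Q_tail e (Suc (N + j)) = 1" for j
    by (induction j) (use Q_tail_eq_1_Suc[OF e] \<open>Q_tail e N = 1\<close> in auto)
  then show ?thesis using \<open>N < k\<close> by (metis add_Suc_right less_iff_Suc_add)
qed

lemma Q_tail_eq_0_digits:
  assumes e: "admissible m e" and "Q_tail e N = 0" and "N < k"
  shows "e k = 0"
proof -
  have "e (Suc (N + j)) = 0 \<and> Q_tail e (Suc (N + j)) = 0" for j
    by (induction j) (use Q_tail_eq_0_Suc[OF e] \<open>Q_tail e N = 0\<close> in auto)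
  then show ?thesis using \<open>N < k\<close> by (metis add_Suc_right less_iff_Suc_add)
qed

lemma Q_tail_prefix_eq:
  assumes e: "admissible m e" and e': "admissible m e'" and eq: "DeltaQ q e = DeltaQ q e'"
    and prefix: "\<And>k. 1 \<le> k \<Longrightarrow> k \<le> N \<Longrightarrow> e k = e' k"
  shows "Q_tail e N = Q_tail e' N"
  using prefix
proof (induction N)
  case 0
  then show ?case using eq by (simp add: Q_tail_0)
next
  case (Suc N)
  have "e (Suc N) = e' (Suc N)" using Suc.prems by simp
  moreover have "q (e (Suc N)) (Suc N) > 0" using e q_pos by (simp add: admissible_def)
  ultimately show ?case using Suc Q_tail_Suc[OF e, of N] Q_tail_Suc[OF e', of N] by simp
qed

theorem DeltaQ_eq_first_difference:
  assumes e: "admissible m e" and e': "admissible m e'" and eq: "DeltaQ q e = DeltaQ q e'"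
    and prefix: "\<And>k. 1 \<le> k \<Longrightarrow> k \<le> N \<Longrightarrow> e k = e' k"
    and less: "e (Suc N) < e' (Suc N)"
  shows "e' (Suc N) = Suc (e (Suc N))" and "\<And>k. Suc N < k \<Longrightarrow> e k = m k \<and> e' k = 0"
proof -
  let ?k = "Suc N"
  let ?x = "e ?k" and ?y = "e' ?k"
  have y: "?y \<le> m ?k" using e' by (auto simp: admissible_def)
  have qx: "q ?x ?k > 0" and qy: "q ?y ?k > 0" using q_pos y less by auto
  have "aQ q ?x ?k + q ?x ?k * Q_tail e ?k = aQ q ?y ?k + q ?y ?k * Q_tail e' ?k"
    using Q_tail_prefix_eq[OF e e' eq prefix] Q_tail_Suc[OF e, of N] Q_tail_Suc[OF e', of N]
    by simp
  moreover have "q ?x ?k * Q_tail e ?k \<le> q ?x ?k"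
    using Q_tail_le_1[OF e] qx by (simp add: mult_left_le)
  moreover have "0 \<le> q ?y ?k * Q_tail e' ?k"
    using Q_tail_nonneg[OF e'] qy by simp
  moreover have "aQ q (Suc ?x) ?k \<le> aQ q ?y ?k"
    using aQ_mono[of ?k "Suc ?x" ?y] less y by simp
  ultimately have "q ?x ?k * Q_tail e ?k = q ?x ?k * 1" and "q ?y ?k * Q_tail e' ?k = 0"
    and between: "aQ q (Suc ?x) ?k = aQ q ?y ?k"
    using aQ_Suc[of q ?x ?k] by linarith+
  then have "Q_tail e ?k = 1" and "Q_tail e' ?k = 0" using qx qy by simp_all
  then show "\<And>k. ?k < k \<Longrightarrow> e k = m k \<and> e' k = 0"
    using Q_tail_eq_1_digits[OF e] Q_tail_eq_0_digits[OF e'] by blast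
  show "?y = Suc ?x"
  proof (rule ccontr)
    assume "?y \<noteq> Suc ?x"
    then have "aQ q (Suc (Suc ?x)) ?k \<le> aQ q ?y ?k" and "q (Suc ?x) ?k > 0"
      using aQ_mono[of ?k "Suc (Suc ?x)" ?y] q_pos[of ?k "Suc ?x"] less y by simp_all
    then show False using between by (simp add: aQ_Suc)
  qed
qed

end

section \<open>Ordinary P-expansions\<close>

locale P_expansion =
  fixes m :: "nat \<Rightarrow> nat" and p :: "nat \<Rightarrow> nat \<Rightarrow> real"
  assumes p_sum: "\<And>k. k \<ge> 1 \<Longrightarrow> (\<Sum>i\<le>m k. p i k) = 1"
    and p_prod: "\<And>d. admissible m d \<Longrightarrow> (\<lambda>N. \<Prod>k\<in>{1..N}. \<bar>p (d k) k\<bar>) \<longlonglongrightarrow> 0"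
begin

definition P_term :: "(nat \<Rightarrow> nat) \<Rightarrow> nat \<Rightarrow> real" where
  "P_term e k = betaP p (e (Suc k)) (Suc k) * (\<Prod>j\<in>{1..k}. p (e j) j)"

definition P_prefix_sum :: "(nat \<Rightarrow> nat) \<Rightarrow> nat \<Rightarrow> real" where
  "P_prefix_sum e K = (\<Sum>k<K. P_term e k)"

definition P_prefix_prod :: "(nat \<Rightarrow> nat) \<Rightarrow> nat \<Rightarrow> real" where
  "P_prefix_prod e K = (\<Prod>j\<in>{1..K}. p (e j) j)"

lemma Fdigits_eq_suminf_P_term: "Fdigits m p d = suminf (P_term (negaDigits m d))"
proof -
  have "betatilde m p (d k) k = betaP p (negaDigits m d k) k"
    and "ptilde m p (d k) k = p (negaDigits m d k) k" for k
    by (simp_all add: betatilde_def ptilde_def negaDigits_def)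
  then show ?thesis by (simp add: Fdigits_def P_term_def[abs_def])
qed

lemma P_prefix_sum_Suc:
  "P_prefix_sum e (Suc K) = P_prefix_sum e K + betaP p (e (Suc K)) (Suc K) * P_prefix_prod e K"
  by (simp add: P_prefix_sum_def P_term_def P_prefix_prod_def)

lemma P_prefix_prod_Suc: "P_prefix_prod e (Suc K) = P_prefix_prod e K * p (e (Suc K)) (Suc K)"
  by (simp add: P_prefix_prod_def)

lemma P_prefix_cong:
  assumes "\<And>k. 1 \<le> k \<Longrightarrow> k \<le> N \<Longrightarrow> e k = e' k"
  shows "P_prefix_sum e N = P_prefix_sum e' N \<and> P_prefix_prod e N = P_prefix_prod e' N"
  using assms
proof (induction N)
  case 0
  then show ?case by (simp add: P_prefix_sum_def P_prefix_prod_def)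
next
  case (Suc N)
  then show ?case by (simp add: P_prefix_sum_Suc P_prefix_prod_Suc)
qed

lemma P_term_sums_zero_tail:
  assumes "\<And>k. N < k \<Longrightarrow> e k = 0"
  shows "P_term e sums P_prefix_sum e N"
  unfolding P_prefix_sum_def
  by (rule sums_finite) (use assms in \<open>auto simp: P_term_def betaP_def\<close>)

text \<open>The digit m k contributes betaP p (m k) k + p (m k) k = 1, so partial sum plus prefix
  product is constant from position N on, and the prefix product tends to 0.\<close>

lemma P_term_sums_max_tail:
  assumes e: "admissible m e" and tail: "\<And>k. N < k \<Longrightarrow> e k = m k"
  shows "P_term e sums (P_prefix_sum e N + P_prefix_prod e N)"
proof -
  have invariant: "P_prefix_sum e K + P_prefix_prod e K = P_prefix_sum e N + P_prefix_prod e N"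
    if "N \<le> K" for K
    using that
  proof (induction K rule: dec_induct)
    case (step K)
    have digit_mass: "betaP p (m (Suc K)) (Suc K) + p (m (Suc K)) (Suc K) = 1"
      using p_sum[of "Suc K"] by (simp add: betaP_def lessThan_Suc_atMost[symmetric])
    have "P_prefix_sum e (Suc K) + P_prefix_prod e (Suc K) = P_prefix_sum e K
        + P_prefix_prod e K * (betaP p (m (Suc K)) (Suc K) + p (m (Suc K)) (Suc K))"
      using step.hyps tail[of "Suc K"] by (simp add: P_prefix_sum_Suc P_prefix_prod_Suc algebra_simps)
    then show ?case using step.IH digit_mass by simp
  qed simp
  have "(\<lambda>K. \<bar>P_prefix_prod e K\<bar>) \<longlonglongrightarrow> 0"
    using p_prod[OF e] by (simp add: P_prefix_prod_def abs_prod)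
  then have "(\<lambda>K. P_prefix_sum e N + P_prefix_prod e N - P_prefix_prod e K)
      \<longlonglongrightarrow> P_prefix_sum e N + P_prefix_prod e N - 0"
    by (intro tendsto_intros) (simp add: tendsto_rabs_zero_iff)
  moreover have "\<forall>\<^sub>F K in sequentially.
      P_prefix_sum e N + P_prefix_prod e N - P_prefix_prod e K = P_prefix_sum e K"
    using invariant by (intro eventually_sequentiallyI[of N]) (metis add_diff_cancel_right')
  ultimately show ?thesis
    unfolding sums_def P_prefix_sum_def[symmetric] using Lim_transform_eventually by fastforce
qed

lemma P_term_sums_carry_pair:
  assumes e: "admissible m e" and prefix: "\<And>k. 1 \<le> k \<Longrightarrow> k \<le> N \<Longrightarrow> e k = e' k"
    and carry: "e' (Suc N) = Suc (e (Suc N))"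
    and tails: "\<And>k. Suc N < k \<Longrightarrow> e k = m k \<and> e' k = 0"
  shows "P_term e sums P_prefix_sum e' (Suc N)" and "P_term e' sums P_prefix_sum e' (Suc N)"
proof -
  have "P_prefix_sum e (Suc N) + P_prefix_prod e (Suc N) = P_prefix_sum e' (Suc N)"
    using P_prefix_cong[OF prefix] carry
    by (simp add: P_prefix_sum_Suc P_prefix_prod_Suc betaP_Suc algebra_simps)
  then show "P_term e sums P_prefix_sum e' (Suc N)"
    using P_term_sums_max_tail[OF e, of "Suc N"] tails by simp
  show "P_term e' sums P_prefix_sum e' (Suc N)"
    using P_term_sums_zero_tail[of "Suc N" e'] tails by simp
qed

end

section \<open>Well-definedness of F\<close>

locale nega_QP = Q_expansion m q + P_expansion m p
  for m :: "nat \<Rightarrow> nat" and q p :: "nat \<Rightarrow> nat \<Rightarrow> real"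
begin

lemma P_term_sums_DeltaQ_cong:
  assumes e: "admissible m e" and e': "admissible m e'" and eq: "DeltaQ q e = DeltaQ q e'"
    and sums: "P_term e sums v"
  shows "P_term e' sums v"
proof (cases "\<forall>k\<ge>1. e k = e' k")
  case True
  then have "P_term e = P_term e'"
    by (intro ext) (simp add: P_term_def)
  then show ?thesis using sums by simp
next
  case False
  define K where "K = (LEAST k. k \<ge> 1 \<and> e k \<noteq> e' k)"
  have K: "K \<ge> 1 \<and> e K \<noteq> e' K"
    using False unfolding K_def by (metis (mono_tags, lifting) LeastI)
  then obtain N where N: "K = Suc N" by (cases K) auto
  have prefix: "1 \<le> k \<Longrightarrow> k \<le> N \<Longrightarrow> e k = e' k" for k
    using not_less_Least[of k "\<lambda>k. k \<ge> 1 \<and> e k \<noteq> e' k"] N unfolding K_def by fastforce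
  show ?thesis
  proof (cases "e K < e' K")
    case True
    note diff = DeltaQ_eq_first_difference[OF e e' eq prefix True[unfolded N]]
    show ?thesis
      using sums_unique2[OF sums P_term_sums_carry_pair(1)[OF e prefix diff]]
        P_term_sums_carry_pair(2)[OF e prefix diff] by simp
  next
    case False
    then have "e' (Suc N) < e (Suc N)" using K N by simp
    note diff = DeltaQ_eq_first_difference[OF e' e eq[symmetric] prefix[symmetric] this]
    show ?thesis
      using sums_unique2[OF sums P_term_sums_carry_pair(2)[OF e' prefix[symmetric] diff]]
        P_term_sums_carry_pair(1)[OF e' prefix[symmetric] diff] by simp
  qed
qed

lemma Ffun_negaQ:
  assumes d: "admissible m d" and sums: "P_term (negaDigits m d) sums v"
  shows "Ffun m q p (negaQ m q d) = v"
proof -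
  define d' where "d' = (SOME d'. admissible m d' \<and> negaQ m q d' = negaQ m q d)"
  have "admissible m d' \<and> negaQ m q d' = negaQ m q d"
    unfolding d'_def by (rule someI[of _ d]) (use d in simp)
  then have "P_term (negaDigits m d') sums v"
    using P_term_sums_DeltaQ_cong[OF negaDigits_admissible[OF d] negaDigits_admissible[of m d'] _ sums]
    by (simp add: negaQ_def)
  then show ?thesis
    unfolding Ffun_def d'_def[symmetric] Fdigits_eq_suminf_P_term by (rule sums_unique[symmetric])
qed

lemma Ffun_negaQ_zero_tail:
  assumes "admissible m d" and "\<And>k. N < k \<Longrightarrow> negaDigits m d k = 0"
  shows "Ffun m q p (negaQ m q d) = P_prefix_sum (negaDigits m d) N"
  using assms by (intro Ffun_negaQ P_term_sums_zero_tail)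

lemma Ffun_negaQ_max_tail:
  assumes "admissible m d" and "\<And>k. N < k \<Longrightarrow> negaDigits m d k = m k"
  shows "Ffun m q p (negaQ m q d) = P_prefix_sum (negaDigits m d) N + P_prefix_prod (negaDigits m d) N"
  using assms by (intro Ffun_negaQ P_term_sums_max_tail negaDigits_admissible)

end

section \<open>The increment on a cylinder\<close>

lemma negaDigits_cylA_tail:
  "n < k \<Longrightarrow> negaDigits m (cylA m n c) k = (if odd n then 0 else m k)"
  by (auto simp: negaDigits_def cylA_def)

lemma negaDigits_cylB_tail:
  "n < k \<Longrightarrow> negaDigits m (cylB m n c) k = (if odd n then m k else 0)"
  by (auto simp: negaDigits_def cylB_def)

theorem mainTheorem4:
  fixes m :: "nat \<Rightarrow> nat" and q p :: "nat \<Rightarrow> nat \<Rightarrow> real"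
    and n :: nat and c :: "nat \<Rightarrow> nat"
  assumes q_pos: "\<And>k i. k \<ge> 1 \<Longrightarrow> i \<le> m k \<Longrightarrow> q i k > 0"
    and q_sum: "\<And>k. k \<ge> 1 \<Longrightarrow> (\<Sum>i\<le>m k. q i k) = 1"
    and q_prod: "\<And>d. admissible m d \<Longrightarrow> (\<lambda>N. \<Prod>k\<in>{1..N}. q (d k) k) \<longlonglongrightarrow> 0"
    and p_bound: "\<And>k i. k \<ge> 1 \<Longrightarrow> i \<le> m k \<Longrightarrow> -1 < p i k \<and> p i k < 1"
    and p_sum: "\<And>k. k \<ge> 1 \<Longrightarrow> (\<Sum>i\<le>m k. p i k) = 1"
    and p_prod: "\<And>d. admissible m d \<Longrightarrow> (\<lambda>N. \<Prod>k\<in>{1..N}. \<bar>p (d k) k\<bar>) \<longlonglongrightarrow> 0"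
    and p_partial: "\<And>k c'. k \<ge> 1 \<Longrightarrow> 1 \<le> c' \<Longrightarrow> c' \<le> m k \<Longrightarrow>
                        0 < (\<Sum>i<c'. p i k) \<and> (\<Sum>i<c'. p i k) < 1"
    and n_pos: "n \<ge> 1"
    and c_digits: "\<And>j. 1 \<le> j \<Longrightarrow> j \<le> n \<Longrightarrow> c j \<le> m j"
  shows "muF m q p n c = (\<Prod>j\<in>{1..n}. ptilde m p (c j) j)"
proof -
  interpret nega_QP m q p
    by unfold_locales (use q_pos q_sum p_sum p_prod in auto)
  define eA where "eA = negaDigits m (cylA m n c)"
  define eB where "eB = negaDigits m (cylB m n c)"
  have A: "admissible m (cylA m n c)" and B: "admissible m (cylB m n c)"
    using c_digits by (auto simp: admissible_def cylA_def cylB_def)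
  have "P_prefix_sum eA n = P_prefix_sum eB n \<and> P_prefix_prod eA n = P_prefix_prod eB n"
    by (rule P_prefix_cong) (simp add: eA_def eB_def negaDigits_def cylA_def cylB_def)
  moreover have "P_prefix_prod eA n = (\<Prod>j\<in>{1..n}. ptilde m p (c j) j)"
    unfolding P_prefix_prod_def
    by (rule prod.cong) (auto simp: eA_def negaDigits_def cylA_def ptilde_def)
  moreover have "Ffun m q p (negaQ m q (cylA m n c)) = P_prefix_sum eA n"
    and "Ffun m q p (negaQ m q (cylB m n c)) = P_prefix_sum eB n + P_prefix_prod eB n"
    if "odd n"
    using Ffun_negaQ_zero_tail[OF A] Ffun_negaQ_max_tail[OF B] that
      negaDigits_cylA_tail negaDigits_cylB_tail by (simp_all add: eA_def eB_def)
  moreover have "Ffun m q p (negaQ m q (cylA m n c)) = P_prefix_sum eA n + P_prefix_prod eA n"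
    and "Ffun m q p (negaQ m q (cylB m n c)) = P_prefix_sum eB n"
    if "even n"
    using Ffun_negaQ_max_tail[OF A] Ffun_negaQ_zero_tail[OF B] that
      negaDigits_cylA_tail negaDigits_cylB_tail by (simp_all add: eA_def eB_def)
  ultimately show ?thesis
    by (simp add: muF_def Let_def)
qed

end
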